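(* Let $K$ be a field, $V$ a vector space over $K$, and $f_L,f_R,g_L,g_R:V\to V$ linear maps. The algebra $A(f_L,f_R,g_L,g_R)$ is associative if and only if $$f_L\circ g_L=g_L\circ f_L=0,\quad f_R\circ g_R=g_R\circ f_R=0,\quad g_R\circ f_L=g_L\circ f_R,\quad f_R\circ g_L=f_L\circ g_R.$$
   Context: Let $V'$ be a second copy of $V$, identified with $V$ via a linear bijection $v\mapsto v'$. The algebra $A(f_L,f_R,g_L,g_R)$ is the vector space $Ke\oplus Ka\oplus V\oplus V'$ (with $e,a$ two new basis elements) with bilinear multiplication determined by $e^2=e$, $a^2=0$, $av=f_L(v)'$, $va=f_R(v)'$, $av'=g_L(v)$, $v'a=g_R(v)$ for $v\in V$, and all other products among $e$, $a$, elements of $V$ and elements of $V'$ equal to zero (in particular $ea=ae=0$, $ev=ve=ev'=v'e=0$, and $VV=VV'=V'V=V'V'=0$). *)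

theory Defs
  imports Complex_Main
begin

text \<open>Elements of A(fL,fR,gL,gR) = K e + K a + V + V' are represented as
  tuples (alpha, beta, v, w) standing for alpha e + beta a + v + w'.
  The multiplication is the bilinear extension of the defining rules:
  e e = e, a a = 0, a v = fL(v)', v a = fR(v)', a v' = gL(v), v' a = gR(v),
  all other products of basis pieces zero.\<close>

type_synonym ('k, 'v) Aelem = "'k \<times> 'k \<times> 'v \<times> 'v"

definition A_mult ::
  "('k::field \<Rightarrow> 'v::ab_group_add \<Rightarrow> 'v) \<Rightarrow> ('v \<Rightarrow> 'v) \<Rightarrow> ('v \<Rightarrow> 'v) \<Rightarrow> ('v \<Rightarrow> 'v) \<Rightarrow> ('v \<Rightarrow> 'v)
   \<Rightarrow> ('k, 'v) Aelem \<Rightarrow> ('k, 'v) Aelem \<Rightarrow> ('k, 'v) Aelem" where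
  "A_mult scale fL fR gL gR x y =
     (case x of (\<alpha>, \<beta>, v, w) \<Rightarrow> case y of (\<gamma>, \<delta>, v2, w2) \<Rightarrow>
        (\<alpha> * \<gamma>,
         0,
         scale \<beta> (gL w2) + scale \<delta> (gR w),
         scale \<beta> (fL v2) + scale \<delta> (fR v)))"

definition A_associative ::
  "('k::field \<Rightarrow> 'v::ab_group_add \<Rightarrow> 'v) \<Rightarrow> ('v \<Rightarrow> 'v) \<Rightarrow> ('v \<Rightarrow> 'v) \<Rightarrow> ('v \<Rightarrow> 'v) \<Rightarrow> ('v \<Rightarrow> 'v) \<Rightarrow> bool" where
  "A_associative scale fL fR gL gR \<longleftrightarrow>
     (\<forall>x y z. A_mult scale fL fR gL gR (A_mult scale fL fR gL gR x y) z
            = A_mult scale fL fR gL gR x (A_mult scale fL fR gL gR y z))"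

end

theory Submission
  imports Defs
begin

text \<open>Products have no a-component, so the V + V' part of a triple product is produced by
  two factors a acting in turn: it depends only on the a-coefficients \<beta>, \<delta>, \<eta> of the three
  factors and on composites of two of the maps. Expanding both bracketings by linearity
  leaves two identities in independent vectors with coefficients \<eta>\<beta>, \<eta>\<delta>, \<beta>\<delta>, \<beta>\<eta>, and
  suitable choices of the factors separate the six relations.\<close>

lemma A_mult_Pair [simp]:
  "A_mult scale fL fR gL gR (\<alpha>, \<beta>, v, w) (\<gamma>, \<delta>, v', w') =
     (\<alpha> * \<gamma>, 0, scale \<beta> (gL w') + scale \<delta> (gR w), scale \<beta> (fL v') + scale \<delta> (fR v))"
  by (simp add: A_mult_def)

lemma A_mult_assoc_left:
  assumes "Vector_Spaces.linear scale scale fR" and "Vector_Spaces.linear scale scale gR"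
  shows "A_mult scale fL fR gL gR (A_mult scale fL fR gL gR (\<alpha>, \<beta>, v, w) (\<gamma>, \<delta>, v', w'))
           (\<epsilon>, \<eta>, v'', w'') =
     (\<alpha> * \<gamma> * \<epsilon>, 0,
      scale (\<eta> * \<beta>) (gR (fL v')) + scale (\<eta> * \<delta>) (gR (fR v)),
      scale (\<eta> * \<beta>) (fR (gL w')) + scale (\<eta> * \<delta>) (fR (gR w)))"
proof -
  interpret fR: Vector_Spaces.linear scale scale fR by fact
  interpret gR: Vector_Spaces.linear scale scale gR by fact
  show ?thesis
    by (simp add: fR.add fR.scale gR.add gR.scale fR.vs1.scale_scale fR.vs1.scale_right_distrib)
qed

lemma A_mult_assoc_right:
  assumes "Vector_Spaces.linear scale scale fL" and "Vector_Spaces.linear scale scale gL"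
  shows "A_mult scale fL fR gL gR (\<alpha>, \<beta>, v, w)
           (A_mult scale fL fR gL gR (\<gamma>, \<delta>, v', w') (\<epsilon>, \<eta>, v'', w'')) =
     (\<alpha> * \<gamma> * \<epsilon>, 0,
      scale (\<beta> * \<delta>) (gL (fL v'')) + scale (\<beta> * \<eta>) (gL (fR v')),
      scale (\<beta> * \<delta>) (fL (gL w'')) + scale (\<beta> * \<eta>) (fL (gR w')))"
proof -
  interpret fL: Vector_Spaces.linear scale scale fL by fact
  interpret gL: Vector_Spaces.linear scale scale gL by fact
  show ?thesis
    by (simp add: fL.add fL.scale gL.add gL.scale fL.vs1.scale_scale fL.vs1.scale_right_distrib)
qed

lemma A_associative_iff_expanded:
  assumes "Vector_Spaces.linear scale scale fL" and "Vector_Spaces.linear scale scale fR"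
    and "Vector_Spaces.linear scale scale gL" and "Vector_Spaces.linear scale scale gR"
  shows "A_associative scale fL fR gL gR \<longleftrightarrow>
    (\<forall>\<beta> \<delta> \<eta> v v' v'' w w' w''.
       scale (\<eta> * \<beta>) (gR (fL v')) + scale (\<eta> * \<delta>) (gR (fR v))
         = scale (\<beta> * \<delta>) (gL (fL v'')) + scale (\<beta> * \<eta>) (gL (fR v')) \<and>
       scale (\<eta> * \<beta>) (fR (gL w')) + scale (\<eta> * \<delta>) (fR (gR w))
         = scale (\<beta> * \<delta>) (fL (gL w'')) + scale (\<beta> * \<eta>) (fL (gR w')))"
  unfolding A_associative_def split_paired_All
  by (simp add: A_mult_assoc_left A_mult_assoc_right assms del: A_mult_Pair) blast

theorem mainTheorem3:
  fixes scale :: "'k::field \<Rightarrow> 'v::ab_group_add \<Rightarrow> 'v"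
    and fL fR gL gR :: "'v \<Rightarrow> 'v"
  assumes "Vector_Spaces.vector_space scale"
    and "Vector_Spaces.linear scale scale fL" and "Vector_Spaces.linear scale scale fR"
    and "Vector_Spaces.linear scale scale gL" and "Vector_Spaces.linear scale scale gR"
  shows "A_associative scale fL fR gL gR \<longleftrightarrow>
     (fL \<circ> gL = (\<lambda>_. 0) \<and> gL \<circ> fL = (\<lambda>_. 0) \<and>
      fR \<circ> gR = (\<lambda>_. 0) \<and> gR \<circ> fR = (\<lambda>_. 0) \<and>
      gR \<circ> fL = gL \<circ> fR \<and> fR \<circ> gL = fL \<circ> gR)"
proof -
  interpret vector_space scale by fact
  show ?thesis
    unfolding A_associative_iff_expanded[OF assms(2-5)] fun_eq_iff o_def
  proof (intro iffI allI conjI)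
    assume expanded: "\<forall>\<beta> \<delta> \<eta> v v' v'' w w' w''.
       scale (\<eta> * \<beta>) (gR (fL v')) + scale (\<eta> * \<delta>) (gR (fR v))
         = scale (\<beta> * \<delta>) (gL (fL v'')) + scale (\<beta> * \<eta>) (gL (fR v')) \<and>
       scale (\<eta> * \<beta>) (fR (gL w')) + scale (\<eta> * \<delta>) (fR (gR w))
         = scale (\<beta> * \<delta>) (fL (gL w'')) + scale (\<beta> * \<eta>) (fL (gR w'))"
    fix u
    \<comment> \<open>The instances below are the triples a a (u + u'), (u + u') a a and a (u + u') a.\<close>
    show "fL (gL u) = 0" "gL (fL u) = 0"
      using expanded[rule_format, where \<beta>=1 and \<delta>=1 and \<eta>=0
        and v=0 and v'=0 and v''=u and w=0 and w'=0 and w''=u] by simp_all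
    show "fR (gR u) = 0" "gR (fR u) = 0"
      using expanded[rule_format, where \<beta>=0 and \<delta>=1 and \<eta>=1
        and v=u and v'=0 and v''=0 and w=u and w'=0 and w''=0] by simp_all
    show "gR (fL u) = gL (fR u)" "fR (gL u) = fL (gR u)"
      using expanded[rule_format, where \<beta>=1 and \<delta>=0 and \<eta>=1
        and v=0 and v'=u and v''=0 and w=0 and w'=u and w''=0] by simp_all
  qed (auto simp: mult.commute)
qed

end
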